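(* Let $p\ge2$, $\mathcal K>0$ and $b(\xi)=\mathcal K|\xi|^{p-2}\xi$ on $\mathbb{R}^{Nn}$. Then for all $\xi,\xi_o,G\in\mathbb{R}^{Nn}$ and every invertible $\Psi\in\mathbb{R}^{n\times n}$, $$\big|b(\xi\Psi)-b(\xi_o\Psi)-\big[b((\xi+G)\Psi)-b((\xi_o+G)\Psi)\big]\big|\le c\,|G|\big(|\xi_o|^2+|\xi-\xi_o|^2+|G|^2\big)^{\frac{p-3}2}|\xi-\xi_o|$$ with a constant $c=c(p,\mathcal K,|\Psi|,|\Psi^{-1}|)$. *)

theory Defs
  imports Complex_Main
begin

text \<open>Real N x n matrices (elements of R^{Nn}) represented as functions
  nat \<Rightarrow> nat \<Rightarrow> real; only the entries with row index < N and column
  index < n are meaningful.  This lets the dimensions N, n be quantified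
  inside the statement, so that the constant can be independent of them.\<close>

type_synonym mat = "nat \<Rightarrow> nat \<Rightarrow> real"

definition fnorm :: "nat \<Rightarrow> nat \<Rightarrow> mat \<Rightarrow> real" where
  "fnorm N n A = sqrt (\<Sum>i<N. \<Sum>j<n. (A i j)\<^sup>2)"

definition mmul :: "nat \<Rightarrow> mat \<Rightarrow> mat \<Rightarrow> mat" where
  "mmul n A B = (\<lambda>i j. \<Sum>k<n. A i k * B k j)"

definition is_inverse :: "nat \<Rightarrow> mat \<Rightarrow> mat \<Rightarrow> bool" where
  "is_inverse n Psi Phi \<longleftrightarrow>
     (\<forall>i<n. \<forall>j<n. mmul n Psi Phi i j = (if i = j then 1 else 0)
                 \<and> mmul n Phi Psi i j = (if i = j then 1 else 0))"

definition madd :: "mat \<Rightarrow> mat \<Rightarrow> mat" where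
  "madd A B = (\<lambda>i j. A i j + B i j)"

definition msub :: "mat \<Rightarrow> mat \<Rightarrow> mat" where
  "msub A B = (\<lambda>i j. A i j - B i j)"

definition bfield :: "real \<Rightarrow> real \<Rightarrow> nat \<Rightarrow> nat \<Rightarrow> mat \<Rightarrow> mat" where
  "bfield p K N n \<xi> = (\<lambda>i j. K * fnorm N n \<xi> powr (p - 2) * \<xi> i j)"

end

theory Submission
  imports Defs "HOL-Analysis.Convex"
begin

(* With F y = |y|^q y and q = p - 2, the left-hand side is K times the mixed second difference
   F(x+h+g) - F(x+h) - F(x+g) + F x at x = xi_o Psi with increments h = (xi - xi_o) Psi and
   g = G Psi, measured in the Frobenius norm, which is an inner product norm.  In any inner
   product space this second difference is at most c(q) |h| |g| (|x| + |h| + |g|)^(q-1):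
   if |x| is small compared with the increments, the Lipschitz bound
   |F a - F b| <= (1 + q) S^q |a - b| along h and along g suffices; otherwise the square
   x + [0,1] h + [0,1] g stays away from the origin, and the mean value theorem applied twice
   expresses the second difference through the second derivative of F, which is of order
   |y|^(q-1).  Multiplication by Psi changes norms at most by the factors |Psi| and |Psi^-1|,
   which turns |x| + |h| + |g| into (|xi_o|^2 + |xi - xi_o|^2 + |G|^2)^(1/2) up to constants. *)

lemma powr_diff_mult_le:
  fixes \<alpha> \<beta> q :: real
  assumes "0 < \<beta>" "\<beta> \<le> \<alpha>" "q \<ge> 0"
  shows "(\<alpha> powr q - \<beta> powr q) * \<beta> \<le> q * \<alpha> powr q * (\<alpha> - \<beta>)"
proof (cases "\<beta> = \<alpha>")
  case False
  then have lt: "\<beta> < \<alpha>" using assms by simp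
  have "\<And>z. \<beta> \<le> z \<Longrightarrow> z \<le> \<alpha> \<Longrightarrow> ((\<lambda>z. z powr q) has_real_derivative q * z powr (q - 1)) (at z)"
    using assms by (auto intro!: has_real_derivative_powr)
  from MVT2[OF lt this] obtain z where z: "\<beta> < z" "z < \<alpha>"
    "\<alpha> powr q - \<beta> powr q = (\<alpha> - \<beta>) * (q * z powr (q - 1))" by blast
  have key: "z powr (q - 1) * \<beta> \<le> \<alpha> powr q"
  proof (cases "q \<ge> 1")
    case True
    then have "z powr (q - 1) * \<beta> \<le> \<alpha> powr (q - 1) * \<alpha>"
      using z assms by (intro mult_mono powr_mono2) auto
    then show ?thesis using assms by (simp add: powr_mult_base mult.commute)
  next
    case False
    then have "z powr (q - 1) * \<beta> \<le> \<beta> powr (q - 1) * \<beta>"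
      using z assms by (intro mult_right_mono powr_mono2') auto
    also have "\<dots> \<le> \<alpha> powr q"
      using assms by (simp add: powr_mult_base mult.commute powr_mono2)
    finally show ?thesis .
  qed
  have "(\<alpha> powr q - \<beta> powr q) * \<beta> = (\<alpha> - \<beta>) * q * (z powr (q - 1) * \<beta>)"
    unfolding z(3) by (simp only: mult_ac)
  also have "\<dots> \<le> (\<alpha> - \<beta>) * q * \<alpha> powr q"
    using key lt assms by (intro mult_left_mono) auto
  finally show ?thesis by (simp only: mult_ac)
qed simp

lemma powr_le_three_times_powr:
  fixes y S e :: real
  assumes "S / 3 < y" "y \<le> S" "-1 \<le> e"
  shows "y powr e \<le> 3 * S powr e"
proof (cases "e \<ge> 0")
  case True
  then have "y powr e \<le> S powr e" using assms by (intro powr_mono2) auto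
  then show ?thesis by (simp add: order_trans)
next
  case False
  have "y powr e \<le> (S / 3) powr e" using assms False by (intro powr_mono2') auto
  also have "\<dots> = 3 powr (- e) * S powr e"
    using assms by (simp add: powr_divide powr_minus_divide)
  also have "\<dots> \<le> 3 * S powr e"
  proof -
    have "3 powr (- e) \<le> 3 powr 1" using assms by (intro powr_mono) auto
    then show ?thesis by (intro mult_right_mono) auto
  qed
  finally show ?thesis .
qed

lemma sum_powr_le_sum_squares_powr:
  fixes s1 s2 s3 t1 t2 t3 a b e :: real
  assumes "0 \<le> a" "0 \<le> b" "0 \<le> s1" "0 \<le> s2" "0 \<le> s3" "0 \<le> t1" "0 \<le> t2" "0 \<le> t3"
    and "s1 \<le> a * t1" "s2 \<le> a * t2" "s3 \<le> a * t3"
    and "t1 \<le> b * s1" "t2 \<le> b * s2" "t3 \<le> b * s3"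
    and pos: "t1\<^sup>2 + t2\<^sup>2 + t3\<^sup>2 > 0"
  shows "(s1 + s2 + s3) powr e
           \<le> (if 0 \<le> e then (3 * a) powr e else b powr (- e)) * (t1\<^sup>2 + t2\<^sup>2 + t3\<^sup>2) powr (e / 2)"
proof -
  define T where "T = sqrt (t1\<^sup>2 + t2\<^sup>2 + t3\<^sup>2)"
  have T: "T > 0" using pos by (simp add: T_def)
  have T_powr: "(t1\<^sup>2 + t2\<^sup>2 + t3\<^sup>2) powr (e / 2) = T powr e"
    using pos by (simp add: T_def powr_half_sqrt[symmetric] powr_powr)
  have t_le: "t1 \<le> T" "t2 \<le> T" "t3 \<le> T"
    unfolding T_def by (intro real_le_rsqrt; simp)+
  have "t1\<^sup>2 + t2\<^sup>2 + t3\<^sup>2 \<le> (t1 + t2 + t3)\<^sup>2"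
  proof -
    have "0 \<le> t1 * t2 + t1 * t3 + t2 * t3" using assms(6-8) by simp
    then show ?thesis by (simp add: power2_eq_square algebra_simps)
  qed
  then have T_le: "T \<le> t1 + t2 + t3"
    unfolding T_def using assms(6-8) by (intro real_le_lsqrt) auto
  show ?thesis
  proof (cases "0 \<le> e")
    case True
    have "a * t1 \<le> a * T" "a * t2 \<le> a * T" "a * t3 \<le> a * T"
      using assms t_le by (intro mult_left_mono; simp)+
    then have "s1 + s2 + s3 \<le> (3 * a) * T"
      using assms by linarith
    then have "(s1 + s2 + s3) powr e \<le> ((3 * a) * T) powr e"
      using assms True by (intro powr_mono2) auto
    then show ?thesis using True assms T by (simp add: T_powr powr_mult)
  next
    case False
    have "T \<le> b * (s1 + s2 + s3)" using T_le assms by (simp add: algebra_simps)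
    then have "b > 0"
      using T assms(2) by (cases "b = 0") auto
    have "(s1 + s2 + s3) powr e \<le> (T / b) powr e"
      using False T \<open>b > 0\<close> \<open>T \<le> b * (s1 + s2 + s3)\<close>
      by (intro powr_mono2') (auto simp: field_simps)
    also have "\<dots> = b powr (- e) * T powr e"
      using T \<open>b > 0\<close> by (simp add: powr_divide powr_minus_divide)
    finally show ?thesis using False by (simp add: T_powr)
  qed
qed

lemma mixed_difference_mvt:
  fixes u ua uab :: "real \<Rightarrow> real \<Rightarrow> real"
  assumes ua: "\<And>a b. 0 \<le> a \<Longrightarrow> a \<le> 1 \<Longrightarrow> 0 \<le> b \<Longrightarrow> b \<le> 1 \<Longrightarrow>
                 ((\<lambda>a. u a b) has_real_derivative ua a b) (at a)"
      and uab: "\<And>a b. 0 \<le> a \<Longrightarrow> a \<le> 1 \<Longrightarrow> 0 \<le> b \<Longrightarrow> b \<le> 1 \<Longrightarrow>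
                 ((\<lambda>b. ua a b) has_real_derivative uab a b) (at b)"
  obtains \<sigma> \<tau> where "0 < \<sigma>" "\<sigma> < 1" "0 < \<tau>" "\<tau> < 1" "u 1 1 - u 1 0 - u 0 1 + u 0 0 = uab \<sigma> \<tau>"
proof -
  have "\<And>a. 0 \<le> a \<Longrightarrow> a \<le> 1 \<Longrightarrow> ((\<lambda>a. u a 1 - u a 0) has_real_derivative ua a 1 - ua a 0) (at a)"
    by (intro DERIV_diff ua) auto
  from MVT2[of 0 1, OF _ this] obtain \<sigma> where \<sigma>: "0 < \<sigma>" "\<sigma> < 1"
    "u 1 1 - u 1 0 - (u 0 1 - u 0 0) = ua \<sigma> 1 - ua \<sigma> 0"
    by auto
  have "\<And>b. 0 \<le> b \<Longrightarrow> b \<le> 1 \<Longrightarrow> ((\<lambda>b. ua \<sigma> b) has_real_derivative uab \<sigma> b) (at b)"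
    using \<sigma> by (intro uab) auto
  from MVT2[of 0 1, OF _ this] obtain \<tau> where "0 < \<tau>" "\<tau> < 1" "ua \<sigma> 1 - ua \<sigma> 0 = uab \<sigma> \<tau>"
    by auto
  with \<sigma> show thesis by (intro that[of \<sigma> \<tau>]) auto
qed

section \<open>Second differences of the field |y|^q y on an inner product space\<close>

definition pow_field :: "real \<Rightarrow> 'a::real_inner \<Rightarrow> 'a" where
  "pow_field q y = norm y powr q *\<^sub>R y"

definition second_diff :: "('a::ab_group_add \<Rightarrow> 'b::ab_group_add) \<Rightarrow> 'a \<Rightarrow> 'a \<Rightarrow> 'a \<Rightarrow> 'b" where
  "second_diff f x h g = f (x + h + g) - f (x + h) - f (x + g) + f x"

lemma second_diff_commute: "second_diff f x h g = second_diff f x g h"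
  by (simp add: second_diff_def add_ac)

lemma norm_pow_field_diff_le_larger_norm:
  fixes a b :: "'a::real_inner"
  assumes q: "q \<ge> 0" and ba: "norm b \<le> norm a"
  shows "norm (pow_field q a - pow_field q b) \<le> (1 + q) * norm a powr q * norm (a - b)"
proof -
  have split: "pow_field q a - pow_field q b
      = norm a powr q *\<^sub>R (a - b) + (norm a powr q - norm b powr q) *\<^sub>R b"
    by (simp add: pow_field_def algebra_simps)
  have mono: "norm b powr q \<le> norm a powr q" using ba q by (intro powr_mono2) auto
  have "(norm a powr q - norm b powr q) * norm b \<le> q * norm a powr q * norm (a - b)"
  proof (cases "norm b = 0")
    case False
    then have "(norm a powr q - norm b powr q) * norm b \<le> q * norm a powr q * (norm a - norm b)"
      using ba q by (intro powr_diff_mult_le) auto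
    also have "\<dots> \<le> q * norm a powr q * norm (a - b)"
      using q by (intro mult_left_mono norm_triangle_ineq2) auto
    finally show ?thesis .
  qed (use q in simp)
  moreover have "norm (pow_field q a - pow_field q b)
      \<le> norm (norm a powr q *\<^sub>R (a - b)) + norm ((norm a powr q - norm b powr q) *\<^sub>R b)"
    unfolding split by (rule norm_triangle_ineq)
  moreover have "norm ((norm a powr q - norm b powr q) *\<^sub>R b) = (norm a powr q - norm b powr q) * norm b"
    using mono by (simp add: abs_of_nonneg)
  moreover have "norm (norm a powr q *\<^sub>R (a - b)) = norm a powr q * norm (a - b)"
    by simp
  ultimately have "norm (pow_field q a - pow_field q b)
      \<le> norm a powr q * norm (a - b) + q * norm a powr q * norm (a - b)"
    by linarith
  then show ?thesis by (simp add: distrib_right)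
qed

lemma norm_pow_field_diff_le:
  fixes a b :: "'a::real_inner"
  assumes q: "q \<ge> 0" and "norm a \<le> S" "norm b \<le> S"
  shows "norm (pow_field q a - pow_field q b) \<le> (1 + q) * S powr q * norm (a - b)"
proof -
  have "norm (pow_field q a - pow_field q b) \<le> (1 + q) * max (norm a) (norm b) powr q * norm (a - b)"
  proof (cases "norm b \<le> norm a")
    case False
    then have "norm (pow_field q b - pow_field q a) \<le> (1 + q) * norm b powr q * norm (b - a)"
      by (intro norm_pow_field_diff_le_larger_norm[OF q]) simp
    with False show ?thesis by (simp add: norm_minus_commute)
  qed (use norm_pow_field_diff_le_larger_norm[OF q] in simp)
  also have "\<dots> \<le> (1 + q) * S powr q * norm (a - b)"
    using q assms by (intro mult_right_mono mult_left_mono powr_mono2) (auto simp: le_max_iff_disj)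
  finally show ?thesis .
qed

lemma norm_second_diff_pow_field_le_increment:
  fixes x h g :: "'a::real_inner"
  assumes q: "q \<ge> 0"
  shows "norm (second_diff (pow_field q) x h g) \<le> 2 * (1 + q) * (norm x + norm h + norm g) powr q * norm h"
proof -
  define S where "S = norm x + norm h + norm g"
  have S: "norm (x + h + g) \<le> S" "norm (x + h) \<le> S" "norm (x + g) \<le> S" "norm x \<le> S"
    unfolding S_def using norm_triangle_ineq[of x h] norm_triangle_ineq[of x g]
      norm_triangle_ineq[of "x + h" g] norm_ge_zero[of h] norm_ge_zero[of g] by linarith+
  have "second_diff (pow_field q) x h g
      = (pow_field q (x + h + g) - pow_field q (x + g)) - (pow_field q (x + h) - pow_field q x)"
    by (simp add: second_diff_def algebra_simps)
  then have "norm (second_diff (pow_field q) x h g)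
      \<le> norm (pow_field q (x + h + g) - pow_field q (x + g)) + norm (pow_field q (x + h) - pow_field q x)"
    by (metis norm_triangle_ineq4)
  also have "\<dots> \<le> 2 * (1 + q) * S powr q * norm h"
    using norm_pow_field_diff_le[OF q S(1) S(3)] norm_pow_field_diff_le[OF q S(2) S(4)]
    by (simp add: algebra_simps)
  finally show ?thesis by (simp add: S_def)
qed

lemma norm_second_diff_pow_field_near:
  fixes x h g :: "'a::real_inner"
  assumes q: "q \<ge> 0" and near: "norm x \<le> 2 * (norm h + norm g)"
  shows "norm (second_diff (pow_field q) x h g)
           \<le> 12 * (1 + q) * norm h * norm g * (norm x + norm h + norm g) powr (q - 1)"
proof (cases "norm x + norm h + norm g = 0")
  case True
  then have "norm h = 0" using norm_ge_zero[of x] norm_ge_zero[of h] norm_ge_zero[of g] by linarith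
  then show ?thesis by (simp add: second_diff_def)
next
  case False
  define S where "S = norm x + norm h + norm g"
  define D where "D = second_diff (pow_field q) x h g"
  define A where "A = 2 * (1 + q) * S powr q"
  have "S > 0"
    unfolding S_def using False norm_ge_zero[of x] norm_ge_zero[of h] norm_ge_zero[of g] by linarith
  have Dh: "norm D \<le> A * norm h" and Dg: "norm D \<le> A * norm g"
    using norm_second_diff_pow_field_le_increment[OF q, of x h g]
      norm_second_diff_pow_field_le_increment[OF q, of x g h]
    by (simp_all add: D_def A_def S_def second_diff_commute add_ac)
  have "S \<le> 3 * (norm h + norm g)" using near by (simp add: S_def)
  then have "S * norm D \<le> 3 * (norm h * norm D + norm g * norm D)"
    using mult_right_mono[of S "3 * (norm h + norm g)" "norm D"] by (simp add: algebra_simps)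
  \<comment> \<open>The bound in h is paired with the factor norm g and vice versa.\<close>
  also have "\<dots> \<le> 3 * (norm h * (A * norm g) + norm g * (A * norm h))"
    using Dh Dg by (intro mult_left_mono add_mono) auto
  also have "\<dots> = S * (12 * (1 + q) * norm h * norm g * S powr (q - 1))"
  proof -
    have "S powr q = S * S powr (q - 1)"
      using \<open>S > 0\<close> by (simp add: powr_mult_base)
    then show ?thesis by (simp add: A_def algebra_simps)
  qed
  finally show ?thesis
    using \<open>S > 0\<close> by (simp add: D_def S_def)
qed

(* pow_field_deriv q y h e is the derivative of <F y, e> in direction h, and
   pow_field_deriv2 q y h g e is the derivative of pow_field_deriv q y h e in direction g. *)
definition pow_field_deriv :: "real \<Rightarrow> 'a::real_inner \<Rightarrow> 'a \<Rightarrow> 'a \<Rightarrow> real" where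
  "pow_field_deriv q y h e =
     norm y powr q * inner h e + q * norm y powr (q - 2) * inner y h * inner y e"

definition pow_field_deriv2 :: "real \<Rightarrow> 'a::real_inner \<Rightarrow> 'a \<Rightarrow> 'a \<Rightarrow> 'a \<Rightarrow> real" where
  "pow_field_deriv2 q y h g e =
     q * norm y powr (q - 2) * (inner y g * inner h e + inner h g * inner y e + inner y h * inner g e)
     + q * (q - 2) * norm y powr (q - 4) * inner y g * inner y h * inner y e"

lemma norm_powr_eq_inner_powr: "norm y powr q = inner y y powr (q / 2)"
  by (simp add: norm_eq_sqrt_inner powr_half_sqrt[symmetric] powr_powr)

lemma inner_line_self:
  "inner (x + s *\<^sub>R h) (x + s *\<^sub>R h) = inner x x + 2 * s * inner x h + s\<^sup>2 * inner h h"
  by (simp add: inner_add_left inner_add_right inner_commute power2_eq_square algebra_simps)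

lemma has_real_derivative_inner_line_self:
  "((\<lambda>s. inner (x + s *\<^sub>R h) (x + s *\<^sub>R h)) has_real_derivative 2 * inner (x + t *\<^sub>R h) h) (at t)"
  unfolding inner_line_self
  by (auto intro!: derivative_eq_intros simp: inner_add_left inner_commute algebra_simps power2_eq_square)

lemma has_real_derivative_inner_line:
  "((\<lambda>s. inner (x + s *\<^sub>R h) e) has_real_derivative inner h e) (at t)"
  by (auto intro!: derivative_eq_intros simp: inner_add_left)

lemma has_real_derivative_norm_powr_line:
  assumes "x + t *\<^sub>R h \<noteq> 0"
  shows "((\<lambda>s. norm (x + s *\<^sub>R h) powr q) has_real_derivative
           q * norm (x + t *\<^sub>R h) powr (q - 2) * inner (x + t *\<^sub>R h) h) (at t)"
proof -
  have "((\<lambda>s. inner (x + s *\<^sub>R h) (x + s *\<^sub>R h) powr (q / 2)) has_real_derivative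
      q / 2 * inner (x + t *\<^sub>R h) (x + t *\<^sub>R h) powr (q / 2 - 1) * (2 * inner (x + t *\<^sub>R h) h)) (at t)"
    using DERIV_fun_powr[OF has_real_derivative_inner_line_self, of x t h "q / 2"] assms by simp
  moreover have "inner y y powr (q / 2 - 1) = norm y powr (q - 2)" for y :: 'a
    using norm_powr_eq_inner_powr[of y "q - 2"] by (simp add: diff_divide_distrib)
  ultimately show ?thesis
    by (simp add: norm_powr_eq_inner_powr[symmetric] mult.assoc)
qed

lemma has_real_derivative_pow_field_line:
  assumes "x + t *\<^sub>R h \<noteq> 0"
  shows "((\<lambda>s. inner (pow_field q (x + s *\<^sub>R h)) e) has_real_derivative
           pow_field_deriv q (x + t *\<^sub>R h) h e) (at t)"
  unfolding pow_field_def pow_field_deriv_def inner_scaleR_left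
  by (rule derivative_eq_intros has_real_derivative_norm_powr_line[OF assms]
        has_real_derivative_inner_line refl)+ (simp add: algebra_simps)

lemma has_real_derivative_pow_field_deriv_line:
  assumes "x + t *\<^sub>R g \<noteq> 0"
  shows "((\<lambda>s. pow_field_deriv q (x + s *\<^sub>R g) h e) has_real_derivative
           pow_field_deriv2 q (x + t *\<^sub>R g) h g e) (at t)"
  unfolding pow_field_deriv_def pow_field_deriv2_def
  by (rule derivative_eq_intros has_real_derivative_norm_powr_line[OF assms]
        has_real_derivative_inner_line refl)+ (simp add: inner_commute algebra_simps)

lemma abs_pow_field_deriv2_le:
  assumes "q \<ge> 0" "y \<noteq> 0"
  shows "\<bar>pow_field_deriv2 q y h g e\<bar>
           \<le> (q * \<bar>q - 2\<bar> + 3 * q) * norm y powr (q - 1) * norm h * norm g * norm e"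
proof -
  define \<nu> where "\<nu> = norm y"
  have \<nu>: "\<nu> > 0" using assms(2) by (simp add: \<nu>_def)
  have pow2: "\<nu> powr (q - 2) * \<nu> = \<nu> powr (q - 1)"
    using \<nu> by (simp add: powr_mult_base mult.commute)
  have pow4: "\<nu> powr (q - 4) * \<nu> ^ 3 = \<nu> powr (q - 1)"
    using \<nu> by (subst powr_numeral[symmetric]) (simp_all add: powr_add[symmetric] del: powr_numeral)
  have cs: "\<bar>inner u v\<bar> \<le> norm u * norm v" for u v :: 'a
    by (rule Cauchy_Schwarz_ineq2)
  have "\<bar>inner y g * inner h e + inner h g * inner y e + inner y h * inner g e\<bar>
      \<le> 3 * (\<nu> * norm h * norm g * norm e)"
  proof -
    have "\<bar>inner y g * inner h e\<bar> \<le> (\<nu> * norm g) * (norm h * norm e)"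
      "\<bar>inner h g * inner y e\<bar> \<le> (norm h * norm g) * (\<nu> * norm e)"
      "\<bar>inner y h * inner g e\<bar> \<le> (\<nu> * norm h) * (norm g * norm e)"
      unfolding abs_mult \<nu>_def by (intro mult_mono cs abs_ge_zero norm_ge_zero mult_nonneg_nonneg)+
    then show ?thesis by (simp only: mult_ac)
  qed
  moreover have "\<bar>inner y g * inner y h * inner y e\<bar> \<le> \<nu> ^ 3 * (norm h * norm g * norm e)"
  proof -
    have "\<bar>inner y g * inner y h * inner y e\<bar> \<le> (\<nu> * norm g) * (\<nu> * norm h) * (\<nu> * norm e)"
      unfolding abs_mult \<nu>_def by (intro mult_mono cs abs_ge_zero norm_ge_zero mult_nonneg_nonneg)+
    then show ?thesis by (simp add: algebra_simps power3_eq_cube)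
  qed
  ultimately have "\<bar>pow_field_deriv2 q y h g e\<bar>
      \<le> q * \<nu> powr (q - 2) * (3 * (\<nu> * norm h * norm g * norm e))
        + q * \<bar>q - 2\<bar> * \<nu> powr (q - 4) * (\<nu> ^ 3 * (norm h * norm g * norm e))"
    unfolding pow_field_deriv2_def \<nu>_def[symmetric] using assms(1)
    by (intro order_trans[OF abs_triangle_ineq] add_mono)
       (simp_all add: abs_mult mult.assoc mult_left_mono)
  also have "\<dots> = 3 * q * (\<nu> powr (q - 2) * \<nu>) * (norm h * norm g * norm e)
      + q * \<bar>q - 2\<bar> * (\<nu> powr (q - 4) * \<nu> ^ 3) * (norm h * norm g * norm e)"
    by (simp only: ac_simps)
  also have "\<dots> = (q * \<bar>q - 2\<bar> + 3 * q) * \<nu> powr (q - 1) * norm h * norm g * norm e"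
    unfolding pow2 pow4 by (simp add: algebra_simps)
  finally show ?thesis by (simp add: \<nu>_def)
qed

lemma inner_second_diff_pow_field_eq_deriv2:
  fixes x h g e :: "'a::real_inner"
  assumes nonzero: "\<And>a b. 0 \<le> a \<Longrightarrow> a \<le> 1 \<Longrightarrow> 0 \<le> b \<Longrightarrow> b \<le> 1 \<Longrightarrow> x + a *\<^sub>R h + b *\<^sub>R g \<noteq> 0"
  obtains a b where "0 \<le> a" "a \<le> 1" "0 \<le> b" "b \<le> 1"
    "inner (second_diff (pow_field q) x h g) e = pow_field_deriv2 q (x + a *\<^sub>R h + b *\<^sub>R g) h g e"
proof -
  define y where "y a b = x + a *\<^sub>R h + b *\<^sub>R g" for a b
  have "((\<lambda>a. inner (pow_field q (y a b)) e) has_real_derivative pow_field_deriv q (y a b) h e) (at a)"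
    if "0 \<le> a" "a \<le> 1" "0 \<le> b" "b \<le> 1" for a b
    using has_real_derivative_pow_field_line[of "x + b *\<^sub>R g" a h q e] nonzero[OF that]
    by (simp add: y_def add_ac)
  moreover have "((\<lambda>b. pow_field_deriv q (y a b) h e) has_real_derivative pow_field_deriv2 q (y a b) h g e) (at b)"
    if "0 \<le> a" "a \<le> 1" "0 \<le> b" "b \<le> 1" for a b
    using has_real_derivative_pow_field_deriv_line[of "x + a *\<^sub>R h" b g q h e] nonzero[OF that]
    by (simp add: y_def)
  ultimately obtain \<sigma> \<tau> where "0 < \<sigma>" "\<sigma> < 1" "0 < \<tau>" "\<tau> < 1"
    "inner (pow_field q (y 1 1)) e - inner (pow_field q (y 1 0)) e - inner (pow_field q (y 0 1)) e
       + inner (pow_field q (y 0 0)) e = pow_field_deriv2 q (y \<sigma> \<tau>) h g e"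
    by (rule mixed_difference_mvt)
  then show thesis
    by (intro that[of \<sigma> \<tau>]) (simp_all add: y_def second_diff_def inner_diff_left inner_add_left)
qed

lemma norm_second_diff_pow_field_far:
  fixes x h g :: "'a::real_inner"
  assumes q: "q \<ge> 0" and far: "2 * (norm h + norm g) < norm x"
  shows "norm (second_diff (pow_field q) x h g)
           \<le> 3 * (q * \<bar>q - 2\<bar> + 3 * q) * norm h * norm g * (norm x + norm h + norm g) powr (q - 1)"
proof -
  define S where "S = norm x + norm h + norm g"
  define D where "D = second_diff (pow_field q) x h g"
  have between: "S / 3 < norm (x + a *\<^sub>R h + b *\<^sub>R g) \<and> norm (x + a *\<^sub>R h + b *\<^sub>R g) \<le> S"
    if "0 \<le> a" "a \<le> 1" "0 \<le> b" "b \<le> 1" for a b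
  proof -
    have "norm (a *\<^sub>R h) \<le> norm h" "norm (b *\<^sub>R g) \<le> norm g"
      using that by (auto intro: mult_left_le_one_le)
    moreover have "norm x - norm (a *\<^sub>R h) - norm (b *\<^sub>R g) \<le> norm (x + a *\<^sub>R h + b *\<^sub>R g)"
      unfolding add.assoc
      using norm_diff_ineq[of x "a *\<^sub>R h + b *\<^sub>R g"] norm_triangle_ineq[of "a *\<^sub>R h" "b *\<^sub>R g"]
      by linarith
    moreover have "norm (x + a *\<^sub>R h + b *\<^sub>R g) \<le> norm x + norm (a *\<^sub>R h) + norm (b *\<^sub>R g)"
      unfolding add.assoc
      using norm_triangle_ineq[of x "a *\<^sub>R h + b *\<^sub>R g"] norm_triangle_ineq[of "a *\<^sub>R h" "b *\<^sub>R g"]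
      by linarith
    ultimately show ?thesis using far by (simp add: S_def)
  qed
  have "0 \<le> S" by (simp add: S_def)
  then have nonzero: "x + a *\<^sub>R h + b *\<^sub>R g \<noteq> 0" if "0 \<le> a" "a \<le> 1" "0 \<le> b" "b \<le> 1" for a b
    using between[OF that] by (metis divide_nonneg_pos norm_zero not_less zero_less_numeral)
  then obtain a b where ab: "0 \<le> a" "a \<le> 1" "0 \<le> b" "b \<le> 1"
    and eq: "inner D D = pow_field_deriv2 q (x + a *\<^sub>R h + b *\<^sub>R g) h g D"
    unfolding D_def by (rule inner_second_diff_pow_field_eq_deriv2)
  define y where "y = x + a *\<^sub>R h + b *\<^sub>R g"
  have y: "S / 3 < norm y" "norm y \<le> S" using between[OF ab] by (simp_all add: y_def)
  have "(norm D)\<^sup>2 \<le> ((q * \<bar>q - 2\<bar> + 3 * q) * norm y powr (q - 1) * norm h * norm g) * norm D"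
    using abs_le_D1[OF abs_pow_field_deriv2_le[OF q nonzero[OF ab], of h g D]]
    unfolding power2_norm_eq_inner eq y_def .
  then have "norm D \<le> (q * \<bar>q - 2\<bar> + 3 * q) * norm y powr (q - 1) * norm h * norm g"
    using q by (cases "norm D = 0") (auto simp: power2_eq_square mult_le_cancel_right)
  also have "\<dots> \<le> (q * \<bar>q - 2\<bar> + 3 * q) * (3 * S powr (q - 1)) * norm h * norm g"
    using y q by (intro mult_right_mono mult_left_mono powr_le_three_times_powr) auto
  finally show ?thesis by (simp add: D_def S_def algebra_simps)
qed

lemma norm_second_diff_pow_field_le:
  fixes x h g :: "'a::real_inner"
  assumes q: "q \<ge> 0"
  shows "norm (second_diff (pow_field q) x h g)
           \<le> (12 * (1 + q) + 3 * (q * \<bar>q - 2\<bar> + 3 * q)) * norm h * norm g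
              * (norm x + norm h + norm g) powr (q - 1)"
proof -
  define R where "R = norm h * norm g * (norm x + norm h + norm g) powr (q - 1)"
  have "R \<ge> 0" by (simp add: R_def)
  then have "12 * (1 + q) * R \<le> (12 * (1 + q) + 3 * (q * \<bar>q - 2\<bar> + 3 * q)) * R"
    and "3 * (q * \<bar>q - 2\<bar> + 3 * q) * R \<le> (12 * (1 + q) + 3 * (q * \<bar>q - 2\<bar> + 3 * q)) * R"
    using q by (intro mult_right_mono; simp)+
  moreover have "norm (second_diff (pow_field q) x h g) \<le> 12 * (1 + q) * R
               \<or> norm (second_diff (pow_field q) x h g) \<le> 3 * (q * \<bar>q - 2\<bar> + 3 * q) * R"
  proof (cases "norm x \<le> 2 * (norm h + norm g)")
    case True
    then show ?thesis
      using norm_second_diff_pow_field_near[OF q True] by (simp add: R_def mult.assoc)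
  next
    case False
    then show ?thesis
      using norm_second_diff_pow_field_far[OF q, of h g x] by (simp add: R_def mult.assoc)
  qed
  ultimately show ?thesis by (auto simp: R_def mult.assoc)
qed

lemma norm_second_diff_pow_field_comparable:
  fixes x h g :: "'a::real_inner"
  assumes q: "q \<ge> 0" and ab: "0 \<le> a" "0 \<le> b" and XHZ: "0 \<le> X" "0 \<le> H" "0 \<le> Z"
    and upper: "norm x \<le> a * X" "norm h \<le> a * H" "norm g \<le> a * Z"
    and lower: "X \<le> b * norm x" "H \<le> b * norm h" "Z \<le> b * norm g"
  shows "norm (second_diff (pow_field q) x h g)
           \<le> (12 * (1 + q) + 3 * (q * \<bar>q - 2\<bar> + 3 * q)) * a\<^sup>2
              * (if 0 \<le> q - 1 then (3 * a) powr (q - 1) else b powr (- (q - 1)))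
              * Z * (X\<^sup>2 + H\<^sup>2 + Z\<^sup>2) powr ((q - 1) / 2) * H"
proof (cases "H = 0")
  case True
  then have "h = 0" using upper(2) by simp
  then show ?thesis by (simp add: second_diff_def True)
next
  case False
  define c where "c = 12 * (1 + q) + 3 * (q * \<bar>q - 2\<bar> + 3 * q)"
  define M where "M = (if 0 \<le> q - 1 then (3 * a) powr (q - 1) else b powr (- (q - 1)))"
  have "c \<ge> 0" using q by (simp add: c_def)
  have "0 < X\<^sup>2 + H\<^sup>2 + Z\<^sup>2"
    using False by (intro add_pos_nonneg add_nonneg_pos) auto
  then have "(norm x + norm h + norm g) powr (q - 1) \<le> M * (X\<^sup>2 + H\<^sup>2 + Z\<^sup>2) powr ((q - 1) / 2)"
    unfolding M_def using ab XHZ upper lower by (intro sum_powr_le_sum_squares_powr) auto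
  then have "c * norm h * norm g * (norm x + norm h + norm g) powr (q - 1)
      \<le> c * (a * H) * (a * Z) * (M * (X\<^sup>2 + H\<^sup>2 + Z\<^sup>2) powr ((q - 1) / 2))"
    using \<open>c \<ge> 0\<close> ab XHZ upper by (intro mult_mono mult_nonneg_nonneg) auto
  with norm_second_diff_pow_field_le[OF q, of x h g] show ?thesis
    unfolding c_def[symmetric] M_def[symmetric] by (simp add: power2_eq_square algebra_simps)
qed

section \<open>Matrices as finitely supported functions\<close>

(* A single inner product space containing R^(N x n) for all N and n, so that the dimensions
   may vary inside the statement. *)
typedef fsmat = "{f :: nat \<times> nat \<Rightarrow> real. finite {k. f k \<noteq> 0}}"
  morphisms entry Abs_fsmat
  by (rule exI[of _ "\<lambda>_. 0"]) simp

setup_lifting type_definition_fsmat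

definition support :: "fsmat \<Rightarrow> (nat \<times> nat) set" where
  "support f = {k. entry f k \<noteq> 0}"

lemma finite_support: "finite (support f)"
  using entry[of f] by (simp add: support_def)

lemma fsmat_eq_iff: "f = g \<longleftrightarrow> (\<forall>k. entry f k = entry g k)"
  by (metis entry_inject ext)

instantiation fsmat :: real_vector
begin

lift_definition zero_fsmat :: fsmat is "\<lambda>_. 0" by simp

lift_definition plus_fsmat :: "fsmat \<Rightarrow> fsmat \<Rightarrow> fsmat" is "\<lambda>f g k. f k + g k"
  by (rule finite_subset[rotated, OF finite_UnI], assumption, assumption) auto

lift_definition minus_fsmat :: "fsmat \<Rightarrow> fsmat \<Rightarrow> fsmat" is "\<lambda>f g k. f k - g k"
  by (rule finite_subset[rotated, OF finite_UnI], assumption, assumption) auto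

lift_definition uminus_fsmat :: "fsmat \<Rightarrow> fsmat" is "\<lambda>f k. - f k" by simp

lift_definition scaleR_fsmat :: "real \<Rightarrow> fsmat \<Rightarrow> fsmat" is "\<lambda>r f k. r * f k"
  by (rule finite_subset[rotated]) auto

instance
  by standard (simp_all add: fsmat_eq_iff zero_fsmat.rep_eq plus_fsmat.rep_eq minus_fsmat.rep_eq
      uminus_fsmat.rep_eq scaleR_fsmat.rep_eq algebra_simps)

end

instantiation fsmat :: real_inner
begin

definition inner_fsmat :: "fsmat \<Rightarrow> fsmat \<Rightarrow> real" where
  "inner_fsmat f g = (\<Sum>k\<in>support f. entry f k * entry g k)"

definition norm_fsmat :: "fsmat \<Rightarrow> real" where "norm_fsmat f = sqrt (inner f f)"
definition sgn_fsmat :: "fsmat \<Rightarrow> fsmat" where "sgn_fsmat f = f /\<^sub>R norm f"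
definition dist_fsmat :: "fsmat \<Rightarrow> fsmat \<Rightarrow> real" where "dist_fsmat f g = norm (f - g)"
definition uniformity_fsmat :: "(fsmat \<times> fsmat) filter" where
  "uniformity_fsmat = (INF e\<in>{0<..}. principal {(x, y). dist x y < e})"
definition open_fsmat :: "fsmat set \<Rightarrow> bool" where
  "open_fsmat U = (\<forall>x\<in>U. \<forall>\<^sub>F (x', y) in uniformity. x' = x \<longrightarrow> y \<in> U)"

lemma inner_fsmat_eq_sum:
  assumes "finite A" "support f \<union> support g \<subseteq> A"
  shows "inner f g = (\<Sum>k\<in>A. entry f k * entry g k)"
  unfolding inner_fsmat_def using assms by (intro sum.mono_neutral_left) (auto simp: support_def)

instance
proof
  fix x y z :: fsmat and r :: real
  let ?A = "support x \<union> support y \<union> support z"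
  have A: "finite ?A" by (simp add: finite_support)
  have "support (x + y) \<subseteq> ?A" "support (r *\<^sub>R x) \<subseteq> ?A"
    by (auto simp: support_def plus_fsmat.rep_eq scaleR_fsmat.rep_eq)
  then have sums: "inner u v = (\<Sum>k\<in>?A. entry u k * entry v k)"
    if "u \<in> {x, y, z, x + y, r *\<^sub>R x}" "v \<in> {x, y, z}" for u v
    using that by (intro inner_fsmat_eq_sum[OF A]) auto
  show "inner x y = inner y x"
    using sums[of x y] sums[of y x] by (simp add: mult.commute)
  show "inner (x + y) z = inner x z + inner y z"
    using sums[of "x + y" z] sums[of x z] sums[of y z]
    by (simp add: plus_fsmat.rep_eq distrib_right sum.distrib)
  show "inner (r *\<^sub>R x) y = r * inner x y"
    using sums[of "r *\<^sub>R x" y] sums[of x y] by (simp add: scaleR_fsmat.rep_eq sum_distrib_left mult.assoc)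
  show "0 \<le> inner x x" by (simp add: inner_fsmat_def sum_nonneg)
  show "inner x x = 0 \<longleftrightarrow> x = 0"
  proof
    assume "inner x x = 0"
    then have "\<forall>k\<in>support x. entry x k * entry x k = 0"
      using sum_nonneg_eq_0_iff[OF finite_support[of x], of "\<lambda>k. entry x k * entry x k"]
      by (simp add: inner_fsmat_def)
    then show "x = 0" by (auto simp: fsmat_eq_iff zero_fsmat.rep_eq support_def)
  qed (simp add: inner_fsmat_def support_def zero_fsmat.rep_eq)
  show "norm x = sqrt (inner x x)" by (simp add: norm_fsmat_def)
qed (simp_all add: sgn_fsmat_def dist_fsmat_def uniformity_fsmat_def open_fsmat_def)

end

definition fsmat_of :: "nat \<Rightarrow> nat \<Rightarrow> mat \<Rightarrow> fsmat" where
  "fsmat_of N n A = Abs_fsmat (\<lambda>(i, j). if i < N \<and> j < n then A i j else 0)"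

lemma entry_fsmat_of: "entry (fsmat_of N n A) = (\<lambda>(i, j). if i < N \<and> j < n then A i j else 0)"
  unfolding fsmat_of_def
  by (rule Abs_fsmat_inverse, simp, rule finite_subset[of _ "{..<N} \<times> {..<n}"])
     (auto split: if_splits)

lemma norm_fsmat_of: "norm (fsmat_of N n A) = fnorm N n A"
proof -
  have "inner (fsmat_of N n A) (fsmat_of N n A)
      = (\<Sum>k\<in>{..<N} \<times> {..<n}. entry (fsmat_of N n A) k * entry (fsmat_of N n A) k)"
    by (rule inner_fsmat_eq_sum) (auto simp: support_def entry_fsmat_of split: if_splits)
  also have "\<dots> = (\<Sum>(i, j)\<in>{..<N} \<times> {..<n}. (A i j)\<^sup>2)"
    by (rule sum.cong) (auto simp: entry_fsmat_of power2_eq_square)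
  also have "\<dots> = (\<Sum>i<N. \<Sum>j<n. (A i j)\<^sup>2)"
    by (simp add: sum.cartesian_product)
  finally show ?thesis by (simp add: norm_eq_sqrt_inner fnorm_def)
qed

lemma fsmat_of_madd: "fsmat_of N n (madd A B) = fsmat_of N n A + fsmat_of N n B"
  by (simp add: fsmat_eq_iff plus_fsmat.rep_eq entry_fsmat_of madd_def)

lemma fsmat_of_msub: "fsmat_of N n (msub A B) = fsmat_of N n A - fsmat_of N n B"
  by (simp add: fsmat_eq_iff minus_fsmat.rep_eq entry_fsmat_of msub_def)

lemma fsmat_of_bfield: "fsmat_of N n (bfield p K N n A) = K *\<^sub>R pow_field (p - 2) (fsmat_of N n A)"
  by (simp add: fsmat_eq_iff scaleR_fsmat.rep_eq entry_fsmat_of bfield_def pow_field_def norm_fsmat_of)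

lemma mmul_madd: "mmul n (madd A B) C = madd (mmul n A C) (mmul n B C)"
  by (simp add: mmul_def madd_def fun_eq_iff distrib_right sum.distrib)

lemma fnorm_nonneg: "fnorm N n A \<ge> 0"
  by (simp add: fnorm_def sum_nonneg)

lemma fnorm_mmul_le: "fnorm N n (mmul n A B) \<le> fnorm N n A * fnorm n n B"
proof -
  have "(\<Sum>i<N. \<Sum>j<n. (mmul n A B i j)\<^sup>2) \<le> (\<Sum>i<N. \<Sum>j<n. (\<Sum>k<n. (A i k)\<^sup>2) * (\<Sum>k<n. (B k j)\<^sup>2))"
    unfolding mmul_def by (intro sum_mono Cauchy_Schwarz_ineq_sum)
  also have "\<dots> = (\<Sum>i<N. \<Sum>k<n. (A i k)\<^sup>2) * (\<Sum>j<n. \<Sum>k<n. (B k j)\<^sup>2)"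
    by (rule sum_product[symmetric])
  also have "(\<Sum>j<n. \<Sum>k<n. (B k j)\<^sup>2) = (\<Sum>k<n. \<Sum>j<n. (B k j)\<^sup>2)"
    by (rule sum.swap)
  finally show ?thesis
    unfolding fnorm_def real_sqrt_mult[symmetric] by (rule real_sqrt_le_mono)
qed

lemma mmul_mmul_inverse:
  assumes "is_inverse n \<Psi> \<Phi>" "j < n"
  shows "mmul n (mmul n A \<Psi>) \<Phi> i j = A i j"
proof -
  have "mmul n (mmul n A \<Psi>) \<Phi> i j = (\<Sum>k<n. \<Sum>l<n. A i l * \<Psi> l k * \<Phi> k j)"
    by (simp add: mmul_def sum_distrib_right)
  also have "\<dots> = (\<Sum>l<n. A i l * mmul n \<Psi> \<Phi> l j)"
    by (subst sum.swap) (simp add: mmul_def sum_distrib_left mult.assoc)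
  also have "\<dots> = (\<Sum>l<n. A i l * (if l = j then 1 else 0))"
    using assms by (intro sum.cong) (auto simp: is_inverse_def)
  also have "\<dots> = A i j" using assms(2) by (simp add: if_distrib cong: if_cong)
  finally show ?thesis .
qed

lemma fnorm_le_fnorm_mmul_inverse:
  assumes "is_inverse n \<Psi> \<Phi>"
  shows "fnorm N n A \<le> fnorm N n (mmul n A \<Psi>) * fnorm n n \<Phi>"
proof -
  have "fnorm N n A = fnorm N n (mmul n (mmul n A \<Psi>) \<Phi>)"
    unfolding fnorm_def using mmul_mmul_inverse[OF assms] by (intro arg_cong[where f = sqrt] sum.cong) auto
  then show ?thesis by (simp add: fnorm_mmul_le)
qed

definition bfield_second_diff_const :: "real \<Rightarrow> real \<Rightarrow> real \<Rightarrow> real \<Rightarrow> real" where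
  "bfield_second_diff_const p K a b =
     K * (12 * (p - 1) + 3 * ((p - 2) * \<bar>p - 4\<bar> + 3 * (p - 2))) * a\<^sup>2
       * (if 3 \<le> p then (3 * a) powr (p - 3) else b powr (3 - p))"

lemma fnorm_bfield_second_diff_le:
  assumes "p \<ge> 2" "K > 0" and inv: "is_inverse n \<Psi> \<Phi>"
  shows "fnorm N n
           (msub (msub (bfield p K N n (mmul n \<xi> \<Psi>)) (bfield p K N n (mmul n \<xi>o \<Psi>)))
                 (msub (bfield p K N n (mmul n (madd \<xi> G) \<Psi>))
                       (bfield p K N n (mmul n (madd \<xi>o G) \<Psi>))))
         \<le> bfield_second_diff_const p K (fnorm n n \<Psi>) (fnorm n n \<Phi>) * fnorm N n G *
            ((fnorm N n \<xi>o)\<^sup>2 + (fnorm N n (msub \<xi> \<xi>o))\<^sup>2 + (fnorm N n G)\<^sup>2) powr ((p - 3) / 2) *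
            fnorm N n (msub \<xi> \<xi>o)"
    (is "fnorm N n ?lhs \<le> _")
proof -
  let ?v = "\<lambda>A. fsmat_of N n (mmul n A \<Psi>)"
  let ?D = "second_diff (pow_field (p - 2)) (?v \<xi>o) (?v (msub \<xi> \<xi>o)) (?v G)"
  have "\<xi> = madd \<xi>o (msub \<xi> \<xi>o)" by (simp add: madd_def msub_def fun_eq_iff)
  then have "?v \<xi> = ?v \<xi>o + ?v (msub \<xi> \<xi>o)" by (metis fsmat_of_madd mmul_madd)
  then have "fsmat_of N n ?lhs = - (K *\<^sub>R ?D)"
    by (simp add: fsmat_of_msub fsmat_of_bfield mmul_madd fsmat_of_madd second_diff_def algebra_simps)
  then have lhs: "fnorm N n ?lhs = K * norm ?D"
    using assms(2) by (simp add: norm_fsmat_of[symmetric])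
  have upper: "norm (?v A) \<le> fnorm n n \<Psi> * fnorm N n A" for A
    using fnorm_mmul_le[of N n A \<Psi>] by (simp add: norm_fsmat_of mult.commute)
  have lower: "fnorm N n A \<le> fnorm n n \<Phi> * norm (?v A)" for A
    using fnorm_le_fnorm_mmul_inverse[OF inv, of N A] by (simp add: norm_fsmat_of mult.commute)
  show ?thesis
    unfolding lhs
    using norm_second_diff_pow_field_comparable[OF _ fnorm_nonneg fnorm_nonneg fnorm_nonneg fnorm_nonneg
        fnorm_nonneg upper upper upper lower lower lower, of "p - 2"] assms(1,2)
    by (auto simp: bfield_second_diff_const_def mult.assoc intro: mult_left_mono)
qed

theorem lemma3p14:
  fixes p K :: real
  assumes "p \<ge> 2" and "K > 0"
  shows "\<exists>C :: real \<Rightarrow> real \<Rightarrow> real.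
    \<forall>(N::nat) (n::nat) (\<Psi>::mat) (\<Phi>::mat) (\<xi>::mat) (\<xi>o::mat) (G::mat).
      is_inverse n \<Psi> \<Phi> \<longrightarrow>
      fnorm N n
        (msub (msub (bfield p K N n (mmul n \<xi> \<Psi>)) (bfield p K N n (mmul n \<xi>o \<Psi>)))
              (msub (bfield p K N n (mmul n (madd \<xi> G) \<Psi>))
                    (bfield p K N n (mmul n (madd \<xi>o G) \<Psi>))))
      \<le> C (fnorm n n \<Psi>) (fnorm n n \<Phi>) * fnorm N n G *
         ((fnorm N n \<xi>o)\<^sup>2 + (fnorm N n (msub \<xi> \<xi>o))\<^sup>2 + (fnorm N n G)\<^sup>2) powr ((p - 3) / 2) *
         fnorm N n (msub \<xi> \<xi>o)"
  using fnorm_bfield_second_diff_le[OF assms] by blast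

end
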